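(* Let $F=\langle f_1,\ldots,f_k\rangle$ be a normalized solution to an instance $(\mathcal{T}_{initial},\mathcal{T}_{final},k)$ of Flip Distance, and let $C$ be a component of $\mathcal{D}_F$. Let $f_i$ and $f_h$, with $i<h$ and $\epsilon(f_i)\ne\epsilon(f_h)$, be two flips in $C$ such that $\phi(f_h)$ crosses $\epsilon(f_i)$ and $\epsilon(f_i)$ is not flipped between $f_i$ and $f_h$ (i.e., there is no $p$ with $i<p<h$ and $\epsilon(f_p)=\epsilon(f_i)$). Then there is a directed path from $f_i$ to $f_h$ in $C$.
   Context: A triangulation of a finite point set $\mathcal{P}$ in the plane is a partition of the convex hull of $\mathcal{P}$ into triangles whose vertex set is $\mathcal{P}$. For an interior edge $e$ of a triangulation $\mathcal{T}$, the quadrilateral associated with $e$ is the union of the two triangles of $\mathcal{T}$ sharing $e$. A flip $f$ with underlying edge $\epsilon(f)=e$ is admissible in $\mathcal{T}$ if $e\in\mathcal{T}$ and its associated quadrilateral is convex; performing it replaces $e$ by the other diagonal $\phi(f)$ of that quadrilateral. Two distinct edges share a triangle in $\mathcal{T}$ if they are edges of the same triangle of $\mathcal{T}$; two edges between points of $\mathcal{P}$ cross if they intersect in their interiors. A sequence $F=\langle f_1,\ldots,f_r\rangle$ is valid with respect to $\mathcal{T}$ if there are triangulations $\mathcal{T}_0=\mathcal{T},\mathcal{T}_1,\ldots,\mathcal{T}_r$ such that $f_i$ is admissible in $\mathcal{T}_{i-1}$ and performing it yields $\mathcal{T}_i$; then we write $\mathcal{T}\xrightarrow{F}\mathcal{T}_r$.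 Flips in a sequence are distinct objects even if they have the same underlying edge. For $1\le i<j\le r$, flip $f_j$ is adjacent to $f_i$ (written $f_i\to f_j$) if (1) either $\phi(f_i)=\epsilon(f_j)$ or $\phi(f_i)$ and $\epsilon(f_j)$ share a triangle in $\mathcal{T}_{j-1}$, and (2) there is no $p$ with $i<p<j$ and $\epsilon(f_p)=\phi(f_i)$. $\mathcal{D}_F$ is the directed acyclic graph whose nodes are the flips of $F$ and whose arcs are the pairs $f_i\to f_j$; a component of it is a weakly connected component. The flip distance between two triangulations is the minimum length of a valid sequence transforming one into the other. An instance $(\mathcal{T}_{initial},\mathcal{T}_{final},k)$ of Flip Distance consists of two triangulations of $\mathcal{P}$ and $k\in\mathbb{N}$; a solution is a valid sequence $F$ of length $k$ with $\mathcal{T}_{initial}\xrightarrow{F}\mathcal{T}_{final}$, where $k$ is the flip distance between them. For a solution $F=\langle f_1,\ldots,f_k\rangle$, $\mathcal{T}_j$ denotes the outcome of applying $\langle f_1,\ldots,f_j\rangle$ to $\mathcal{T}_{initial}$. A changed edge is an edge of $\mathcal{T}_{initial}$ not in $\mathcal{T}_{final}$; a component of $\mathcal{D}_F$ is essential if it contains a flip whose underlying edge is a changed edge. A solution $F$ is normalized if every component of $\mathcal{D}_F$ is essential and the flips of each component of $\mathcal{D}_F$ appear as a consecutive block in $F$. *)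

theory Defs
  imports "HOL-Analysis.Analysis"
begin

type_synonym pt = "real^2"

text \<open>Triangles and edges are represented by their vertex sets (3- resp. 2-element sets).\<close>

definition triangulation :: "pt set \<Rightarrow> pt set set \<Rightarrow> bool" where
  "triangulation P T \<longleftrightarrow> finite P \<and>
     (\<forall>t\<in>T. t \<subseteq> P \<and> card t = 3 \<and> \<not> affine_dependent t) \<and>
     (\<Union>t\<in>T. convex hull t) = convex hull P \<and>
     (\<forall>t\<in>T. \<forall>s\<in>T. (convex hull t) \<inter> (convex hull s) = convex hull (t \<inter> s)) \<and>
     \<Union>T = P"

definition edges :: "pt set set \<Rightarrow> pt set set" where
  "edges T = {e. card e = 2 \<and> (\<exists>t\<in>T. e \<subseteq> t)}"

definition tris_of :: "pt set set \<Rightarrow> pt set \<Rightarrow> pt set set" where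
  "tris_of T e = {t\<in>T. e \<subseteq> t}"

definition flip_diag :: "pt set set \<Rightarrow> pt set \<Rightarrow> pt set" where
  "flip_diag T e = \<Union>(tris_of T e) - e"

definition convex_quad :: "pt set set \<Rightarrow> pt set \<Rightarrow> bool" where
  "convex_quad T e \<longleftrightarrow> (let Q = \<Union>(tris_of T e) in
     card Q = 4 \<and> convex (\<Union>t\<in>tris_of T e. convex hull t) \<and>
     (\<forall>p\<in>Q. p \<notin> convex hull (Q - {p})))"

definition admissible :: "pt set set \<Rightarrow> pt set \<Rightarrow> bool" where
  "admissible T e \<longleftrightarrow> e \<in> edges T \<and> card (tris_of T e) = 2 \<and> convex_quad T e"

definition do_flip :: "pt set set \<Rightarrow> pt set \<Rightarrow> pt set set" where
  "do_flip T e = (T - tris_of T e) \<union> {insert x (flip_diag T e) | x. x \<in> e}"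

text \<open>A flip sequence is the list of underlying edges; 0-based index j is the flip
  f_(j+1). apply_flips T (take j F) is the triangulation before flip F!j.\<close>
fun apply_flips :: "pt set set \<Rightarrow> pt set list \<Rightarrow> pt set set" where
  "apply_flips T [] = T"
| "apply_flips T (e # F) = apply_flips (do_flip T e) F"

definition state :: "pt set set \<Rightarrow> pt set list \<Rightarrow> nat \<Rightarrow> pt set set" where
  "state T F j = apply_flips T (take j F)"

definition phi :: "pt set set \<Rightarrow> pt set list \<Rightarrow> nat \<Rightarrow> pt set" where
  "phi T F j = flip_diag (state T F j) (F ! j)"

definition valid_seq :: "pt set \<Rightarrow> pt set set \<Rightarrow> pt set list \<Rightarrow> bool" where
  "valid_seq P T F \<longleftrightarrow> triangulation P T \<and>
     (\<forall>j<length F. admissible (state T F j) (F ! j) \<and> triangulation P (state T F (Suc j)))"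

definition share_triangle :: "pt set set \<Rightarrow> pt set \<Rightarrow> pt set \<Rightarrow> bool" where
  "share_triangle T e1 e2 \<longleftrightarrow> e1 \<noteq> e2 \<and> e1 \<in> edges T \<and> e2 \<in> edges T \<and>
     (\<exists>t\<in>T. e1 \<subseteq> t \<and> e2 \<subseteq> t)"

definition crosses :: "pt set \<Rightarrow> pt set \<Rightarrow> bool" where
  "crosses e1 e2 \<longleftrightarrow> (\<exists>a b c d. e1 = {a, b} \<and> e2 = {c, d} \<and>
     open_segment a b \<inter> open_segment c d \<noteq> {})"

definition adj :: "pt set set \<Rightarrow> pt set list \<Rightarrow> nat \<Rightarrow> nat \<Rightarrow> bool" where
  "adj T F i j \<longleftrightarrow> i < j \<and> j < length F \<and>
     (phi T F i = F ! j \<or> share_triangle (state T F j) (phi T F i) (F ! j)) \<and>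
     \<not> (\<exists>p. i < p \<and> p < j \<and> F ! p = phi T F i)"

definition arcs :: "pt set set \<Rightarrow> pt set list \<Rightarrow> (nat \<times> nat) set" where
  "arcs T F = {(i, j). adj T F i j}"

definition components :: "pt set set \<Rightarrow> pt set list \<Rightarrow> nat set set" where
  "components T F = {{j. j < length F \<and> (i, j) \<in> (arcs T F \<union> (arcs T F)\<inverse>)\<^sup>*} | i. i < length F}"

definition is_solution :: "pt set \<Rightarrow> pt set set \<Rightarrow> pt set set \<Rightarrow> pt set list \<Rightarrow> bool" where
  "is_solution P Ti Tf F \<longleftrightarrow> triangulation P Ti \<and> triangulation P Tf \<and>
     valid_seq P Ti F \<and> apply_flips Ti F = Tf \<and>
     (\<forall>G. valid_seq P Ti G \<and> apply_flips Ti G = Tf \<longrightarrow> length F \<le> length G)"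

definition changed_edge :: "pt set set \<Rightarrow> pt set set \<Rightarrow> pt set \<Rightarrow> bool" where
  "changed_edge Ti Tf e \<longleftrightarrow> e \<in> edges Ti \<and> e \<notin> edges Tf"

definition essential :: "pt set set \<Rightarrow> pt set set \<Rightarrow> pt set list \<Rightarrow> nat set \<Rightarrow> bool" where
  "essential Ti Tf F C \<longleftrightarrow> (\<exists>j\<in>C. changed_edge Ti Tf (F ! j))"

definition normalized :: "pt set \<Rightarrow> pt set set \<Rightarrow> pt set set \<Rightarrow> pt set list \<Rightarrow> bool" where
  "normalized P Ti Tf F \<longleftrightarrow> is_solution P Ti Tf F \<and>
     (\<forall>C\<in>components Ti F. essential Ti Tf F C \<and> (\<exists>a b. C = {a..<b}))"

end

theory Submission
  imports Defs
begin

text \<open>Fix the flip \<open>f\<^sub>i\<close> and follow the triangulations \<open>T\<^sub>j\<close>, \<open>j > i\<close>, under the invariant: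
  every edge of \<open>T\<^sub>j\<close> crossing \<open>\<epsilon>(f\<^sub>i)\<close> is \<open>\<phi>(f\<^sub>p)\<close> for a flip \<open>f\<^sub>p\<close> reachable from \<open>f\<^sub>i\<close> that has
  not been flipped since. Right after \<open>f\<^sub>i\<close> the only such edge is \<open>\<phi>(f\<^sub>i)\<close>, because edges of one
  triangulation do not cross. If \<open>\<phi>(f\<^sub>j)\<close> crosses \<open>\<epsilon>(f\<^sub>i)\<close>, the crossing point lies in one of the
  two triangles of the convex quadrilateral of \<open>f\<^sub>j\<close>; as \<open>\<epsilon>(f\<^sub>i)\<close> contains no point of \<open>\<P>\<close> in its
  interior, it leaves that triangle across a side, which then crosses \<open>\<epsilon>(f\<^sub>i)\<close> too. By the
  invariant that side is some \<open>\<phi>(f\<^sub>p)\<close>, and it equals or shares a triangle with \<open>\<epsilon>(f\<^sub>j)\<close>, so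
  \<open>f\<^sub>p \<rightarrow> f\<^sub>j\<close>.\<close>

lemma affine_independent_hull_vertex:
  assumes "\<not> affine_dependent t" "v \<in> t" "S \<subseteq> t" "v \<in> convex hull S"
  shows "v \<in> S"
proof (rule ccontr)
  assume "v \<notin> S"
  then have "S \<subseteq> t - {v}" using assms(3) by auto
  then have "convex hull S \<subseteq> affine hull (t - {v})"
    by (meson convex_hull_subset_affine_hull hull_mono subset_trans)
  then show False using assms affine_dependent_def by blast
qed

lemma open_segment_in_simplex_face:
  fixes t :: "'a::euclidean_space set"
  assumes "\<not> affine_dependent t" "S \<subseteq> t" "u \<in> convex hull t" "w \<in> convex hull t"
    "z \<in> open_segment u w" "z \<in> convex hull S"
  shows "u \<in> convex hull S \<and> w \<in> convex hull S"
proof -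
  have "(convex hull S) face_of (convex hull t)"
    using face_of_convex_hull_affine_independent[OF assms(1)] assms(2) by blast
  then show ?thesis using assms unfolding face_of_def by blast
qed

lemma triangulation_point_in_triangle:
  assumes "triangulation P T" "t \<in> T" "v \<in> P" "v \<in> convex hull t"
  shows "v \<in> t"
proof -
  have U: "\<Union>T = P" and ind: "\<forall>t\<in>T. \<not> affine_dependent t"
    and I: "\<forall>t\<in>T. \<forall>s\<in>T. convex hull t \<inter> convex hull s = convex hull (t \<inter> s)"
    using assms(1) unfolding triangulation_def by auto
  obtain s where s: "s \<in> T" "v \<in> s" using U assms(3) by blast
  have "v \<in> convex hull s" using s(2) by (rule hull_inc)
  then have "v \<in> convex hull (t \<inter> s)" using I assms(2,4) s(1) by blast
  then have "v \<in> t \<inter> s" using affine_independent_hull_vertex[of s v "t \<inter> s"] ind s by blast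
  then show ?thesis by simp
qed

lemma triangulation_edge_avoids_points:
  assumes "triangulation P T" "{p, q} \<in> edges T" "v \<in> P"
  shows "v \<notin> open_segment p q"
proof
  assume v: "v \<in> open_segment p q"
  obtain t where t: "t \<in> T" "{p, q} \<subseteq> t" using assms(2) unfolding edges_def by auto
  have ind: "\<not> affine_dependent t" using assms(1) t(1) unfolding triangulation_def by auto
  have v_hull: "v \<in> convex hull {p, q}" using v open_closed_segment segment_convex_hull by blast
  moreover have "convex hull {p, q} \<subseteq> convex hull t" using t(2) by (simp add: hull_mono)
  ultimately have "v \<in> t" using triangulation_point_in_triangle[OF assms(1) t(1) assms(3)] by blast
  then have "v \<in> {p, q}" using affine_independent_hull_vertex[OF ind, of v "{p, q}"] t(2) v_hull by auto
  then show False using v by (auto simp: open_segment_def)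
qed

text \<open>In these definitions every edge crosses itself, so the conclusion is equality.\<close>

lemma triangulation_edges_cross_eq:
  assumes "triangulation P T" "e1 \<in> edges T" "e2 \<in> edges T" "crosses e1 e2"
  shows "e1 = e2"
proof -
  obtain t where t: "t \<in> T" "e1 \<subseteq> t" "card e1 = 2" using assms(2) unfolding edges_def by auto
  obtain s where s: "s \<in> T" "e2 \<subseteq> s" "card e2 = 2" using assms(3) unfolding edges_def by auto
  obtain a b c d z where e: "e1 = {a,b}" "e2 = {c,d}" "z \<in> open_segment a b" "z \<in> open_segment c d"
    using assms(4) unfolding crosses_def by blast
  have indt: "\<not> affine_dependent t" and inds: "\<not> affine_dependent s"
    and I: "convex hull t \<inter> convex hull s = convex hull (t \<inter> s)"
    using assms(1) t(1) s(1) unfolding triangulation_def by auto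
  have zab: "z \<in> convex hull {a,b}" using e(3) open_closed_segment segment_convex_hull by blast
  have zcd: "z \<in> convex hull {c,d}" using e(4) open_closed_segment segment_convex_hull by blast
  have "convex hull {a,b} \<subseteq> convex hull t" "convex hull {c,d} \<subseteq> convex hull s"
    using e(1,2) t(2) s(2) by (simp_all add: hull_mono)
  then have zts: "z \<in> convex hull (t \<inter> s)" using zab zcd I by blast
  have at: "a \<in> convex hull t" "b \<in> convex hull t" using e(1) t(2) by (auto intro: hull_inc)
  have cs: "c \<in> convex hull s" "d \<in> convex hull s" using e(2) s(2) by (auto intro: hull_inc)
  have "a \<in> convex hull (t \<inter> s)" "b \<in> convex hull (t \<inter> s)"
    using open_segment_in_simplex_face[OF indt _ at e(3) zts] by auto
  then have ab: "a \<in> t \<inter> s" "b \<in> t \<inter> s"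
    using affine_independent_hull_vertex[OF indt, of _ "t \<inter> s"] e(1) t(2) by auto
  have "c \<in> convex hull (t \<inter> s)" "d \<in> convex hull (t \<inter> s)"
    using open_segment_in_simplex_face[OF inds _ cs e(4) zts] by auto
  then have cd: "c \<in> t" "d \<in> t"
    using affine_independent_hull_vertex[OF inds, of _ "t \<inter> s"] e(2) s(2) by auto
  have ct: "c \<in> convex hull t" "d \<in> convex hull t" using cd by (auto intro: hull_inc)
  have "c \<in> convex hull {a,b}" "d \<in> convex hull {a,b}"
    using open_segment_in_simplex_face[OF indt _ ct e(4) zab] ab by auto
  then have "c \<in> {a,b}" "d \<in> {a,b}"
    using affine_independent_hull_vertex[OF indt, of _ "{a,b}"] cd ab by auto
  then have "e2 \<subseteq> e1" using e by auto
  moreover have "finite e1" using t(3) card.infinite by fastforce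
  ultimately show ?thesis using card_subset_eq[of e1 e2] t(3) s(3) by simp
qed

lemma segment_leaves_triangle_through_side:
  fixes t :: "pt set"
  assumes "\<not> affine_dependent t" "card t = 3" "y \<in> convex hull t" "p \<notin> convex hull t"
  obtains z u w where "z \<in> closed_segment y p" "z \<noteq> p" "u \<in> t" "w \<in> t" "u \<noteq> w"
    "z \<in> closed_segment u w"
proof -
  have "card t = Suc DIM(pt)" using assms(2) by simp
  then have fr: "frontier (convex hull t) = \<Union> {convex hull (t - {a}) | a. a \<in> t}"
    by (rule frontier_of_convex_hull)
  have fin: "finite t" using assms(2) card.infinite by fastforce
  have "closed_segment y p \<inter> convex hull t \<noteq> {}" using assms(3) by blast
  moreover have "closed_segment y p - convex hull t \<noteq> {}" using assms(4) by blast
  ultimately have "closed_segment y p \<inter> frontier (convex hull t) \<noteq> {}"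
    using connected_Int_frontier[of "closed_segment y p" "convex hull t"] connected_segment by blast
  then obtain z a where z: "z \<in> closed_segment y p" "z \<in> convex hull (t - {a})" "a \<in> t"
    using fr by auto
  have "convex hull (t - {a}) \<subseteq> convex hull t" by (simp add: hull_mono)
  then have "z \<in> convex hull t" using z(2) by blast
  then have "z \<noteq> p" using assms(4) by auto
  have "card (t - {a}) = 2" using assms(2) z(3) fin by simp
  then obtain u w where uw: "t - {a} = {u, w}" "u \<noteq> w" by (meson card_2_iff)
  then have "z \<in> closed_segment u w" using z(2) by (simp add: segment_convex_hull)
  then show ?thesis using that z(1) \<open>z \<noteq> p\<close> uw by blast
qed

lemma closed_segment_to_endpoint_in_open_segment:
  fixes x :: "'a::euclidean_space"
  assumes "x \<in> open_segment p q" "z \<in> closed_segment x p" "z \<noteq> p"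
  shows "z \<in> open_segment p q"
proof -
  from assms(1) obtain u where u: "0 < u" "u < 1" "x = (1 - u) *\<^sub>R p + u *\<^sub>R q" and pq: "p \<noteq> q"
    by (auto simp: in_segment)
  from assms(2) obtain r where r: "0 \<le> r" "r \<le> 1" "z = (1 - r) *\<^sub>R x + r *\<^sub>R p"
    by (auto simp: in_segment)
  have zz: "z = (1 - (1-r)*u) *\<^sub>R p + ((1-r)*u) *\<^sub>R q"
    using r(3) u(3) by (simp add: algebra_simps)
  have "(1-r)*u < 1" using u r by (smt (verit) mult_left_le_one_le)
  moreover have "0 < (1-r)*u"
  proof -
    have "r \<noteq> 1" using r assms(3) by auto
    then show ?thesis using r u by simp
  qed
  ultimately show ?thesis using zz pq by (auto simp: in_segment intro!: exI[of _ "(1-r)*u"])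
qed

lemma triangle_side_crossing_segment:
  fixes t :: "pt set"
  assumes "\<not> affine_dependent t" "card t = 3" "x \<in> convex hull t" "x \<in> open_segment p q"
    "p \<notin> convex hull t" "t \<inter> open_segment p q = {}"
  obtains u w where "u \<in> t" "w \<in> t" "u \<noteq> w" "crosses {u, w} {p, q}"
proof -
  obtain z u w where z: "z \<in> closed_segment x p" "z \<noteq> p" "u \<in> t" "w \<in> t" "u \<noteq> w"
    "z \<in> closed_segment u w"
    using segment_leaves_triangle_through_side[OF assms(1-3,5)] by blast
  have zpq: "z \<in> open_segment p q"
    using closed_segment_to_endpoint_in_open_segment[OF assms(4) z(1,2)] .
  then have "z \<in> open_segment u w"
    using z(3,4,6) assms(6) by (auto simp: open_segment_def)
  then have "crosses {u, w} {p, q}" using zpq unfolding crosses_def by blast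
  then show ?thesis using that z(3-5) by blast
qed

lemma admissible_flip_diag:
  assumes "admissible T e"
  shows "card (flip_diag T e) = 2" "e \<inter> flip_diag T e = {}"
proof -
  let ?Q = "\<Union>(tris_of T e)"
  have q4: "card ?Q = 4" and e2: "card e = 2" and tr2: "card (tris_of T e) = 2"
    using assms unfolding admissible_def convex_quad_def edges_def Let_def by auto
  have finQ: "finite ?Q" using q4 card.infinite by fastforce
  obtain t where t: "t \<in> tris_of T e" using tr2 card.empty by (metis all_not_in_conv zero_neq_numeral)
  have "e \<subseteq> ?Q" using t unfolding tris_of_def by auto
  then have "card (?Q - e) = 2" using q4 e2 finQ by (simp add: card_Diff_subset finite_subset)
  then show "card (flip_diag T e) = 2" unfolding flip_diag_def .
  show "e \<inter> flip_diag T e = {}" unfolding flip_diag_def by auto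
qed

lemma edges_do_flip:
  assumes "admissible T e" "e' \<in> edges (do_flip T e)"
  shows "e' = flip_diag T e \<or> (e' \<in> edges T \<and> e' \<noteq> e)"
proof -
  note qp = admissible_flip_diag[OF assms(1)]
  from assms(2) obtain t' where c2: "card e' = 2" and t': "t' \<in> do_flip T e" "e' \<subseteq> t'"
    unfolding edges_def by auto
  show ?thesis
  proof (cases "t' \<in> T - tris_of T e")
    case True
    then have "e' \<in> edges T" using c2 t' unfolding edges_def by auto
    moreover have "e' \<noteq> e" using True t'(2) unfolding tris_of_def by auto
    ultimately show ?thesis by blast
  next
    case False
    then obtain x where x: "x \<in> e" "t' = insert x (flip_diag T e)"
      using t'(1) unfolding do_flip_def by auto
    show ?thesis
    proof (cases "x \<in> e'")
      case False
      then have "e' \<subseteq> flip_diag T e" using t'(2) x by auto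
      then have "e' = flip_diag T e" using c2 qp(1)
        by (metis card_subset_eq card.infinite zero_neq_numeral)
      then show ?thesis by blast
    next
      case True
      obtain a b where ab: "a \<noteq> b" "e' = {a, b}" using c2 by (meson card_2_iff)
      obtain y where y: "e' = {x, y}" "y \<noteq> x" using ab True by auto
      have yf: "y \<in> flip_diag T e" using y t'(2) x by auto
      then obtain t0 where t0: "t0 \<in> tris_of T e" "y \<in> t0" unfolding flip_diag_def by auto
      have "e \<subseteq> t0" "t0 \<in> T" using t0 unfolding tris_of_def by auto
      then have "e' \<subseteq> t0" using y x t0 by auto
      then have "e' \<in> edges T" using c2 \<open>t0 \<in> T\<close> unfolding edges_def by auto
      moreover have "e' \<noteq> e" using yf qp(2) y by auto
      ultimately show ?thesis by blast
    qed
  qed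
qed

lemma flip_diag_crossing_side:
  assumes "triangulation P T" "admissible T e" "crosses (flip_diag T e) g"
    "triangulation P T'" "g \<in> edges T'"
  obtains t e' where "t \<in> tris_of T e" "e' \<subseteq> t" "card e' = 2" "crosses e' g"
proof -
  note result = that
  obtain b d p q x where bd: "flip_diag T e = {b,d}" "g = {p,q}"
    "x \<in> open_segment b d" "x \<in> open_segment p q"
    using assms(3) unfolding crosses_def by blast
  let ?U = "\<Union>t\<in>tris_of T e. convex hull t"
  have "convex ?U" using assms(2) unfolding admissible_def convex_quad_def Let_def by auto
  moreover have "b \<in> ?U" "d \<in> ?U" using bd(1) unfolding flip_diag_def by (auto intro: hull_inc)
  ultimately have "closed_segment b d \<subseteq> ?U" by (simp add: closed_segment_subset)
  then obtain t where t: "t \<in> tris_of T e" "x \<in> convex hull t"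
    using bd(3) open_closed_segment by blast
  have tT: "t \<in> T" using t(1) unfolding tris_of_def by auto
  have ind: "\<not> affine_dependent t" and c3: "card t = 3" and tP: "t \<subseteq> P"
    using assms(1) tT unfolding triangulation_def by auto
  obtain t2 where "t2 \<in> T'" "g \<subseteq> t2" and g2: "card g = 2" using assms(5) unfolding edges_def by auto
  then have pqP: "p \<in> P" "q \<in> P" using assms(4) bd(2) unfolding triangulation_def by auto
  have "{p, q} \<in> edges T'" "{q, p} \<in> edges T'" using assms(5) bd(2) by (auto simp: insert_commute)
  then have avoid: "t \<inter> open_segment p q = {}" "t \<inter> open_segment q p = {}"
    using triangulation_edge_avoids_points[OF assms(4)] tP by blast+
  have side: thesis
    if hyp: "p \<in> P" "p \<notin> t" "x \<in> open_segment p q" "t \<inter> open_segment p q = {}" "g = {p, q}"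
    for p q
  proof -
    have "p \<notin> convex hull t" using triangulation_point_in_triangle[OF assms(1) tT] hyp(1,2) by blast
    then obtain u w where "u \<in> t" "w \<in> t" "u \<noteq> w" "crosses {u, w} {p, q}"
      using triangle_side_crossing_segment[OF ind c3 t(2) hyp(3)] hyp(4) by blast
    then show thesis using result[OF t(1), of "{u, w}"] hyp(5) by simp
  qed
  consider "p \<in> t" "q \<in> t" | "p \<notin> t" | "q \<notin> t" by blast
  then show thesis
  proof cases
    case 1
    have "crosses g g" unfolding crosses_def
      by (rule exI[of _ p], rule exI[of _ q], rule exI[of _ p], rule exI[of _ q]) (use bd(2,4) in auto)
    then show thesis using result[OF t(1), of g] 1 bd(2) g2 by simp
  next
    case 2
    then show thesis using side[OF pqP(1) _ bd(4) avoid(1) bd(2)] by blast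
  next
    case 3
    moreover have "x \<in> open_segment q p" using bd(4) by (simp add: open_segment_commute)
    moreover have "g = {q, p}" using bd(2) by auto
    ultimately show thesis using side[OF pqP(2) _ _ avoid(2)] by blast
  qed
qed

lemma apply_flips_append: "apply_flips T (xs @ ys) = apply_flips (apply_flips T xs) ys"
  by (induction xs arbitrary: T) auto

lemma state_Suc: "j < length F \<Longrightarrow> state T F (Suc j) = do_flip (state T F j) (F ! j)"
  unfolding state_def by (simp add: take_Suc_conv_app_nth apply_flips_append)

lemma valid_seq_state_triangulation:
  assumes "valid_seq P T F" "j \<le> length F"
  shows "triangulation P (state T F j)"
proof (cases j)
  case 0 then show ?thesis using assms unfolding valid_seq_def state_def by simp
next
  case (Suc k) then show ?thesis using assms unfolding valid_seq_def by auto
qed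

lemma valid_seq_state_admissible: "valid_seq P T F \<Longrightarrow> j < length F \<Longrightarrow> admissible (state T F j) (F ! j)"
  unfolding valid_seq_def by auto

definition crossing_edges_traced :: "pt set set \<Rightarrow> pt set list \<Rightarrow> nat \<Rightarrow> nat \<Rightarrow> bool" where
  "crossing_edges_traced T F i j \<longleftrightarrow> (\<forall>e\<in>edges (state T F j). crosses e (F ! i) \<longrightarrow>
     (\<exists>p. i \<le> p \<and> p < j \<and> phi T F p = e \<and> (i, p) \<in> (arcs T F)\<^sup>* \<and>
        (\<forall>q. p < q \<and> q < j \<longrightarrow> F ! q \<noteq> e)))"

lemma traced_crossing_flip_reachable:
  assumes v: "valid_seq P T F" and ij: "i < j" "j < length F" and I: "crossing_edges_traced T F i j"
    and c: "crosses (phi T F j) (F ! i)"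
  shows "(i, j) \<in> (arcs T F)\<^sup>*"
proof -
  let ?S = "state T F j"
  have trj: "triangulation P ?S" using valid_seq_state_triangulation[OF v] ij by simp
  have tri: "triangulation P (state T F i)" using valid_seq_state_triangulation[OF v] ij by simp
  have admj: "admissible ?S (F ! j)" using valid_seq_state_admissible[OF v] ij by simp
  have admi: "admissible (state T F i) (F ! i)" using valid_seq_state_admissible[OF v] ij by simp
  have gi: "F ! i \<in> edges (state T F i)" using admi unfolding admissible_def by blast
  have c': "crosses (flip_diag ?S (F ! j)) (F ! i)" using c unfolding phi_def .
  obtain t e' where t: "t \<in> tris_of ?S (F ! j)" "e' \<subseteq> t" "card e' = 2" "crosses e' (F ! i)"
    using flip_diag_crossing_side[OF trj admj c' tri gi] by blast
  have tS: "t \<in> ?S" "F ! j \<subseteq> t" using t(1) unfolding tris_of_def by auto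
  have e'E: "e' \<in> edges ?S" using t(2,3) tS(1) unfolding edges_def by auto
  obtain p where p: "i \<le> p" "p < j" "phi T F p = e'" "(i, p) \<in> (arcs T F)\<^sup>*"
    "\<forall>q. p < q \<and> q < j \<longrightarrow> F ! q \<noteq> e'"
    using I e'E t(4) unfolding crossing_edges_traced_def by blast
  have fjE: "F ! j \<in> edges ?S" using admj unfolding admissible_def by blast
  have "phi T F p = F ! j \<or> share_triangle ?S (phi T F p) (F ! j)"
  proof (cases "e' = F ! j")
    case True then show ?thesis using p(3) by simp
  next
    case False
    then have "share_triangle ?S e' (F ! j)" unfolding share_triangle_def
      using e'E fjE tS t(2) by blast
    then show ?thesis using p(3) by simp
  qed
  then have "adj T F p j" unfolding adj_def using p(2,3,5) ij(2) by blast
  then have "(p, j) \<in> arcs T F" unfolding arcs_def by simp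
  then show ?thesis using p(4) by (meson rtrancl.rtrancl_into_rtrancl)
qed

lemma crossing_edges_traced_first:
  assumes v: "valid_seq P T F" and i: "i < length F"
  shows "crossing_edges_traced T F i (Suc i)"
  unfolding crossing_edges_traced_def
proof (intro ballI impI)
  fix e assume e: "e \<in> edges (state T F (Suc i))" "crosses e (F ! i)"
  have admi: "admissible (state T F i) (F ! i)" using valid_seq_state_admissible[OF v] i by simp
  have tri: "triangulation P (state T F i)" using valid_seq_state_triangulation[OF v] i by simp
  have gi: "F ! i \<in> edges (state T F i)" using admi unfolding admissible_def by blast
  have "e = flip_diag (state T F i) (F ! i) \<or> (e \<in> edges (state T F i) \<and> e \<noteq> F ! i)"
    using edges_do_flip[OF admi] e(1) state_Suc[OF i] by simp
  moreover have "\<not> (e \<in> edges (state T F i) \<and> e \<noteq> F ! i)"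
    using triangulation_edges_cross_eq[OF tri _ gi e(2)] by blast
  ultimately have "e = phi T F i" unfolding phi_def by blast
  then show "\<exists>p. i \<le> p \<and> p < Suc i \<and> phi T F p = e \<and> (i, p) \<in> (arcs T F)\<^sup>* \<and>
        (\<forall>q. p < q \<and> q < Suc i \<longrightarrow> F ! q \<noteq> e)" by (intro exI[of _ i]) auto
qed

lemma crossing_edges_traced_Suc:
  assumes v: "valid_seq P T F" and ij: "i < j" "j < length F" and I: "crossing_edges_traced T F i j"
  shows "crossing_edges_traced T F i (Suc j)"
  unfolding crossing_edges_traced_def
proof (intro ballI impI)
  fix e assume e: "e \<in> edges (state T F (Suc j))" "crosses e (F ! i)"
  have admj: "admissible (state T F j) (F ! j)" using valid_seq_state_admissible[OF v] ij by simp
  have "e = phi T F j \<or> (e \<in> edges (state T F j) \<and> e \<noteq> F ! j)"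
    using edges_do_flip[OF admj] e(1) state_Suc[OF ij(2)] unfolding phi_def by simp
  then show "\<exists>p. i \<le> p \<and> p < Suc j \<and> phi T F p = e \<and> (i, p) \<in> (arcs T F)\<^sup>* \<and>
        (\<forall>q. p < q \<and> q < Suc j \<longrightarrow> F ! q \<noteq> e)"
  proof
    assume ej: "e = phi T F j"
    have "(i, j) \<in> (arcs T F)\<^sup>*" using traced_crossing_flip_reachable[OF v ij I] e(2) ej by simp
    then show ?thesis using ej ij by (intro exI[of _ j]) auto
  next
    assume ee: "e \<in> edges (state T F j) \<and> e \<noteq> F ! j"
    then obtain p where p: "i \<le> p" "p < j" "phi T F p = e" "(i, p) \<in> (arcs T F)\<^sup>*"
      "\<forall>q. p < q \<and> q < j \<longrightarrow> F ! q \<noteq> e" using I e(2) unfolding crossing_edges_traced_def by blast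
    have "\<forall>q. p < q \<and> q < Suc j \<longrightarrow> F ! q \<noteq> e" using p(5) ee by (metis less_Suc_eq)
    then show ?thesis using p by (intro exI[of _ p]) auto
  qed
qed

lemma crossing_edges_traced_all:
  assumes v: "valid_seq P T F" and "i < j" "j \<le> length F"
  shows "crossing_edges_traced T F i j"
  using assms(2,3)
proof (induction j)
  case 0 then show ?case by simp
next
  case (Suc j)
  show ?case
  proof (cases "i = j")
    case True then show ?thesis using crossing_edges_traced_first[OF v] Suc.prems by simp
  next
    case False
    then have "i < j" using Suc.prems by simp
    then show ?thesis using Suc crossing_edges_traced_Suc[OF v] by simp
  qed
qed

lemma crossing_flip_reachable:
  assumes "valid_seq P T F" "i < h" "h < length F" "crosses (phi T F h) (F ! i)"
  shows "(i, h) \<in> (arcs T F)\<^sup>+"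
proof -
  have "crossing_edges_traced T F i h" using crossing_edges_traced_all[OF assms(1,2)] assms(3) by simp
  then have "(i, h) \<in> (arcs T F)\<^sup>*" using traced_crossing_flip_reachable[OF assms(1-3) _ assms(4)] by simp
  then show ?thesis using assms(2) by (auto simp: rtrancl_eq_or_trancl)
qed

theorem lemma3:
  fixes P :: "pt set" and Ti Tf :: "pt set set" and F :: "pt set list"
    and C :: "nat set" and i h :: nat
  assumes "normalized P Ti Tf F"
    and "C \<in> components Ti F"
    and "i \<in> C" and "h \<in> C" and "i < h"
    and "F ! i \<noteq> F ! h"
    and "crosses (phi Ti F h) (F ! i)"
    and "\<forall>p. i < p \<and> p < h \<longrightarrow> F ! p \<noteq> F ! i"
  shows "(i, h) \<in> (arcs Ti F)\<^sup>+"
proof -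
  have "valid_seq P Ti F" using assms(1) unfolding normalized_def is_solution_def by blast
  moreover have "h < length F" using assms(2,4) unfolding components_def by auto
  ultimately show ?thesis using crossing_flip_reachable assms(5,7) by blast
qed

end
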